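(* Let $d\geq 3$ be an integer and let $N_d = 3^d\cdot \mathrm{lcm}\{3^1-2^1,3^2-2^2,\ldots,3^d-2^d\}$. Let $\mathcal{H}$ be a complex Hilbert space with $\dim(\mathcal{H})\leq d$, and let $U,V$ be unitary operators on $\mathcal{H}$ such that $$\|V^{-1}U^2V-U^3\|<\varepsilon$$ for some $\varepsilon$ with $0<\varepsilon<\frac{1}{6\cdot 3^d\, d\, N_d}$. Then $$\|UV^{-1}UV-V^{-1}UVU\|<4d^3N_d\,\varepsilon .$$
   Context: $\|\cdot\|$ denotes the operator norm. *)

theory Defs
  imports "HOL-Analysis.Analysis"
begin

text \<open>A complex Hilbert space of finite dimension n is modelled as complex^'n
(the norm on complex^'n is the standard Hermitian l2-norm); operators are
matrices complex^'n^'n acting by *v.\<close>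

definition conj_transpose :: "complex^'n^'m \<Rightarrow> complex^'m^'n" where
  "conj_transpose A = (\<chi> i j. cnj (A $ j $ i))"

definition unitary_op :: "complex^'n^'n \<Rightarrow> bool" where
  "unitary_op U \<longleftrightarrow> U ** conj_transpose U = mat 1 \<and> conj_transpose U ** U = mat 1"

definition op_norm :: "complex^'n^'m \<Rightarrow> real" where
  "op_norm A = onorm (\<lambda>x. A *v x)"

definition N_const :: "nat \<Rightarrow> nat" where
  "N_const d = 3 ^ d * Lcm ((\<lambda>k. 3 ^ k - 2 ^ k) ` {1..d})"

end

theory Submission
  imports Defs "HOL-Computational_Algebra.Fundamental_Theorem_Algebra"
begin

(* Put W = V\<inverse> U V; it is unitary and the hypothesis says |W\<^sup>2 - U\<^sup>3| \<le> e.
   (1) Spectral theorem: the unitary W has an orthonormal eigenbasis with eigenvalues on the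
       unit circle (proved via an eigenvector in the Krylov space of any vector orthogonal to
       a maximal orthonormal family of eigenvectors).
   (2) Every eigenvalue \<mu> of W is an eigenvalue of U (eigenvector V b); testing W\<^sup>2 - U\<^sup>3 on
       that vector produces an eigenvalue \<nu> of W with |\<mu>\<^sup>3 - \<nu>\<^sup>2| \<le> e.  So the (at most d)
       eigenvalues carry an "approximate square-root-of-cube" self map.
   (3) A purely scalar lemma about such maps on finite subsets of the unit circle: the orbit
       cycles within d steps, forcing |\<mu>^N - 1| \<le> 4 N e, where N = N_const d.
   (4) Hence |W^(N+1) - W| \<le> 4 N e; as N is odd, W^(N+1) = (W\<^sup>2)^k is within k e of (U\<^sup>3)^k.
       So W is within 5 N e of a power of U, which commutes with U, and the commutator
       U W - W U has norm at most 10 N e \<le> 4 d\<^sup>3 N e. *)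

section \<open>The Hermitian inner product on complex^'n\<close>

definition hinner :: "complex^'n \<Rightarrow> complex^'n \<Rightarrow> complex" where
  "hinner x y = (\<Sum>i\<in>UNIV. x$i * cnj (y$i))"

lemma hinner_diff_left: "hinner (x - y) z = hinner x z - hinner y z"
  by (simp add: hinner_def sum_subtractf algebra_simps)

lemma hinner_scale_left: "hinner (c *s x) y = c * hinner x y"
  by (simp add: hinner_def sum_distrib_left algebra_simps)

lemma hinner_scale_right: "hinner x (c *s y) = cnj c * hinner x y"
  by (simp add: hinner_def sum_distrib_left algebra_simps)

lemma hinner_zero_left [simp]: "hinner 0 y = 0"
  by (simp add: hinner_def)

lemma hinner_sum_left: "hinner (\<Sum>b\<in>B. f b) y = (\<Sum>b\<in>B. hinner (f b) y)"
  by (simp add: hinner_def sum_component sum_distrib_right) (rule sum.swap)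

lemma hinner_commute: "hinner y x = cnj (hinner x y)"
  by (simp add: hinner_def mult.commute)

lemma hinner_sum_right: "hinner x (\<Sum>b\<in>B. f b) = (\<Sum>b\<in>B. hinner x (f b))"
  by (subst hinner_commute) (simp add: hinner_sum_left, subst hinner_commute, simp)

lemma hinner_self: "hinner x x = complex_of_real ((norm x)\<^sup>2)"
proof -
  have "(norm x)\<^sup>2 = (\<Sum>i\<in>UNIV. (cmod (x$i))\<^sup>2)"
    by (simp add: norm_vec_def L2_set_def sum_nonneg)
  have "hinner x x = (\<Sum>i\<in>UNIV. complex_of_real ((cmod (x$i))\<^sup>2))"
    unfolding hinner_def complex_norm_square ..
  then show ?thesis
    unfolding of_real_sum[symmetric] \<open>(norm x)\<^sup>2 = _\<close> .
qed

lemma hinner_self_eq_1: "hinner x x = 1 \<longleftrightarrow> norm x = 1"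
proof -
  have "hinner x x = 1 \<longleftrightarrow> (norm x)\<^sup>2 = 1"
    unfolding hinner_self by (simp only: of_real_eq_1_iff)
  also have "\<dots> \<longleftrightarrow> norm x = 1"
    using power2_eq_iff_nonneg[of "norm x" 1] by simp
  finally show ?thesis .
qed

lemma hinner_adjoint: "hinner (A *v x) y = hinner x (conj_transpose A *v y)"
  unfolding hinner_def matrix_vector_mult_def conj_transpose_def
  by (simp add: sum_distrib_left sum_distrib_right algebra_simps) (rule sum.swap)

lemma norm_scale_vec: "norm (c *s (x::complex^'n)) = cmod c * norm x"
  by (simp add: norm_vec_def L2_set_def norm_mult power_mult_distrib
      sum_distrib_left[symmetric] real_sqrt_mult)

lemma mat_scalar_vec: "(mat c :: complex^'n^'n) *v x = c *s x"
  by (simp add: vec_eq_iff matrix_vector_mult_def mat_def if_distrib[where f="\<lambda>a. a * _"]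
      cong: if_cong)

lemma conj_transpose_conj_transpose [simp]: "conj_transpose (conj_transpose A) = A"
  by (simp add: conj_transpose_def vec_eq_iff)

lemma conj_transpose_mult: "conj_transpose (A ** B) = conj_transpose B ** conj_transpose A"
  by (simp add: conj_transpose_def vec_eq_iff matrix_matrix_mult_def mult.commute)

lemma conj_transpose_id: "conj_transpose (mat 1 :: complex^'n^'n) = mat 1"
  by (simp add: conj_transpose_def mat_def vec_eq_iff)

lemma unitary_conj_transpose: "unitary_op U \<Longrightarrow> unitary_op (conj_transpose U)"
  by (simp add: unitary_op_def)

lemma unitary_mult:
  assumes "unitary_op A" "unitary_op B"
  shows "unitary_op (A ** B)"
proof -
  have "A ** B ** (conj_transpose B ** conj_transpose A)
          = A ** (B ** conj_transpose B) ** conj_transpose A"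
    and "conj_transpose B ** conj_transpose A ** (A ** B)
          = conj_transpose B ** (conj_transpose A ** A) ** B"
    by (simp_all add: matrix_mul_assoc)
  then show ?thesis
    using assms by (simp add: unitary_op_def conj_transpose_mult)
qed

lemma unitary_matrix_inv:
  assumes "unitary_op V"
  shows "matrix_inv V = conj_transpose V"
  unfolding matrix_inv_def
proof (rule some_equality)
  fix A assume "V ** A = mat 1 \<and> A ** V = mat 1"
  then have "conj_transpose V ** (V ** A) = conj_transpose V" by simp
  then show "A = conj_transpose V"
    using assms by (simp add: matrix_mul_assoc unitary_op_def)
qed (use assms in \<open>auto simp: unitary_op_def\<close>)

lemma unitary_isometry:
  assumes "unitary_op U"
  shows "norm (U *v x) = norm x"
proof -
  have "hinner (U *v x) (U *v x) = hinner x x"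
    using assms by (simp add: hinner_adjoint matrix_vector_mul_assoc unitary_op_def)
  then have "complex_of_real ((norm (U *v x))\<^sup>2) = complex_of_real ((norm x)\<^sup>2)"
    by (simp only: hinner_self)
  then have "(norm (U *v x))\<^sup>2 = (norm x)\<^sup>2"
    using of_real_eq_iff by blast
  then show ?thesis by (simp add: power2_eq_iff_nonneg)
qed

lemma unitary_eigenvalue:
  assumes "unitary_op W" "W *v b = l *s b" "b \<noteq> 0"
  shows "cmod l = 1" "conj_transpose W *v b = cnj l *s b"
proof -
  have "norm (l *s b) = norm b"
    using assms(1,2) unitary_isometry by metis
  then show l1: "cmod l = 1"
    using assms(3) by (simp add: norm_scale_vec)
  have "b = conj_transpose W *v (W *v b)"
    using assms(1) by (simp add: matrix_vector_mul_assoc unitary_op_def)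
  then have "cnj l *s b = (cnj l * l) *s (conj_transpose W *v b)"
    by (metis assms(2) vec.scale vector_smult_assoc)
  also have "cnj l * l = 1"
    using l1 by (metis complex_norm_square mult.commute of_real_1 one_power2)
  finally show "conj_transpose W *v b = cnj l *s b" by simp
qed

section \<open>Matrix powers and polynomials of a matrix\<close>

fun matpow :: "'a::semiring_1^'n^'n \<Rightarrow> nat \<Rightarrow> 'a^'n^'n" where
  "matpow A 0 = mat 1"
| "matpow A (Suc k) = A ** matpow A k"

lemma matpow_eigenvector: "A *v b = l *s b \<Longrightarrow> matpow A k *v (b::complex^'n) = l^k *s b"
  by (induction k)
    (auto simp: matrix_vector_mul_assoc[symmetric] vec.scale vector_smult_assoc mult.commute)

lemma matpow_commute: "A ** matpow A k = matpow A k ** A"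
  by (induction k) (simp_all, metis matrix_mul_assoc)

lemma matpow_add: "matpow A (a + b) = matpow A a ** matpow A b"
  by (induction a) (simp_all add: matrix_mul_assoc)

lemma matpow_mult: "matpow A (a * b) = matpow (matpow A a) b"
  by (induction b) (simp_all add: matpow_add)

lemma unitary_matpow: "unitary_op A \<Longrightarrow> unitary_op (matpow A k)"
  by (induction k) (simp add: unitary_op_def conj_transpose_id, simp add: unitary_mult)

definition mpoly_apply :: "complex^'n^'n \<Rightarrow> complex poly \<Rightarrow> complex^'n \<Rightarrow> complex^'n" where
  "mpoly_apply A p y = (\<Sum>k\<le>degree p. coeff p k *s (matpow A k *v y))"

lemma mpoly_apply_bound:
  assumes "degree p \<le> n"
  shows "mpoly_apply A p y = (\<Sum>k\<le>n. coeff p k *s (matpow A k *v y))"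
  unfolding mpoly_apply_def
  by (rule sum.mono_neutral_right[symmetric]) (use assms in \<open>auto simp: coeff_eq_0\<close>)

lemma mpoly_apply_add: "mpoly_apply A (p + q) y = mpoly_apply A p y + mpoly_apply A q y"
proof -
  have "degree (p + q) \<le> max (degree p) (degree q)"
    by (rule degree_add_le) auto
  then show ?thesis
    by (simp add: mpoly_apply_bound[of _ "max (degree p) (degree q)"] vector_sadd_rdistrib
        sum.distrib)
qed

lemma mpoly_apply_diff: "mpoly_apply A (p - q) y = mpoly_apply A p y - mpoly_apply A q y"
  using mpoly_apply_add[of A "p - q" q y] by (simp add: algebra_simps)

lemma mpoly_apply_smult: "mpoly_apply A (smult c p) y = c *s mpoly_apply A p y"
  using degree_smult_le[of c p]
  by (simp add: mpoly_apply_bound[of _ "degree p"] mpoly_apply_def[of A p]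
      vec.scale_sum_right vector_smult_assoc)

lemma mpoly_apply_const: "mpoly_apply A [:c:] y = c *s y"
  by (simp add: mpoly_apply_def)

lemma mpoly_apply_monom: "mpoly_apply A (monom a k) y = a *s (matpow A k *v y)"
proof -
  have "mpoly_apply A (monom a k) y = (\<Sum>j\<le>k. coeff (monom a k) j *s (matpow A j *v y))"
    by (rule mpoly_apply_bound) (rule degree_monom_le)
  also have "\<dots> = (\<Sum>j\<le>k. if j = k then a *s (matpow A j *v y) else 0)"
    by (rule sum.cong) auto
  finally show ?thesis by simp
qed

lemma mpoly_apply_zero [simp]: "mpoly_apply A 0 y = 0"
  by (simp add: mpoly_apply_def)

lemma mpoly_apply_sum:
  "finite K \<Longrightarrow> mpoly_apply A (\<Sum>k\<in>K. g k) y = (\<Sum>k\<in>K. mpoly_apply A (g k) y)"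
  by (induction K rule: finite_induct) (simp_all add: mpoly_apply_add)

lemma mpoly_apply_linear_factor:
  "mpoly_apply A ([:-r, 1:] * q) y = A *v mpoly_apply A q y - r *s mpoly_apply A q y"
proof -
  have shift: "mpoly_apply A (pCons 0 q) y = A *v mpoly_apply A q y"
  proof -
    have "mpoly_apply A (pCons 0 q) y
            = (\<Sum>k\<le>Suc (degree q). coeff (pCons 0 q) k *s (matpow A k *v y))"
      by (rule mpoly_apply_bound) (rule degree_pCons_le)
    also have "\<dots> = (\<Sum>k\<le>degree q. coeff q k *s (matpow A (Suc k) *v y))"
      by (subst sum.atMost_Suc_shift) simp
    finally show ?thesis
      by (simp add: mpoly_apply_def vec.sum vec.scale matrix_vector_mul_assoc)
  qed
  have "[:-r, 1:] * q = smult (-r) q + pCons 0 q" by simp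
  then show ?thesis
    by (simp only: mpoly_apply_add mpoly_apply_smult shift) (simp add: vector_smult_lneg)
qed

text \<open>Every vector is annihilated by some nonzero polynomial in A (dimension count).\<close>
lemma annihilating_polynomial:
  fixes A :: "complex^'n^'n"
  shows "\<exists>p. p \<noteq> 0 \<and> mpoly_apply A p y = 0"
proof -
  define n where "n = CARD('n)"
  define f where "f k = matpow A k *v y" for k
  show ?thesis
  proof (cases "inj_on f {..n}")
    case False
    then obtain i j where ij: "i \<noteq> j" "f i = f j"
      by (auto simp: inj_on_def)
    define p where "p = monom 1 i - monom (1::complex) j"
    have "coeff p i = 1" using ij by (simp add: p_def)
    moreover have "mpoly_apply A p y = 0"
      using ij by (simp add: p_def mpoly_apply_diff mpoly_apply_monom f_def)
    ultimately show ?thesis by (metis coeff_0 zero_neq_one)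
  next
    case True
    define T where "T = f ` {..n}"
    have "\<not> vec.independent T"
    proof
      assume "vec.independent T"
      then have "card T \<le> vec.dim (UNIV :: (complex^'n) set)"
        by (intro vec.independent_card_le_dim) auto
      then show False
        using True by (simp add: T_def card_image card_cart_basis n_def)
    qed
    then obtain u v where uv: "v \<in> T" "u v \<noteq> 0" "(\<Sum>v\<in>T. u v *s v) = 0"
      using vec.dependent_finite[of T] by (auto simp: T_def)
    define p where "p = (\<Sum>k\<le>n. monom (u (f k)) k)"
    obtain k0 where k0: "k0 \<le> n" "v = f k0"
      using uv(1) by (auto simp: T_def)
    have "coeff p k0 = u v"
      using k0 by (simp add: p_def coeff_sum)
    moreover have "mpoly_apply A p y = (\<Sum>v\<in>T. u v *s v)"
      unfolding T_def sum.reindex[OF True]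
      by (simp add: p_def mpoly_apply_sum mpoly_apply_monom f_def)
    ultimately show ?thesis
      using uv by (metis coeff_0)
  qed
qed

text \<open>The Krylov space of a nonzero vector contains an eigenvector: peel off linear factors of
  an annihilating polynomial (fundamental theorem of algebra) until the image is nonzero.\<close>
lemma eigenvector_in_krylov_space:
  fixes A :: "complex^'n^'n"
  assumes "y \<noteq> 0"
  shows "\<exists>q r. mpoly_apply A q y \<noteq> 0 \<and> A *v mpoly_apply A q y = r *s mpoly_apply A q y"
proof -
  have "p \<noteq> 0 \<Longrightarrow> mpoly_apply A p y = 0 \<Longrightarrow> ?thesis" for p
  proof (induction "degree p" arbitrary: p rule: less_induct)
    case less
    show ?case
    proof (cases "degree p = 0")
      case True
      then have "p = [:coeff p 0:]" and "coeff p 0 \<noteq> 0"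
        using less.prems(1) degree_0_id by (metis, metis pCons_0_0)
      then show ?thesis
        using less.prems(2) assms by (metis mpoly_apply_const vector_mul_eq_0)
    next
      case False
      then have "\<not> constant (poly p)"
        by (simp add: constant_degree)
      then obtain r where "poly p r = 0"
        using fundamental_theorem_of_algebra by blast
      then obtain q where pq: "p = [:-r, 1:] * q"
        by (auto simp: poly_eq_0_iff_dvd elim: dvdE)
      with less.prems(1) have q0: "q \<noteq> 0" by auto
      then have dq: "degree q < degree p"
        unfolding pq by (subst degree_mult_eq) auto
      show ?thesis
      proof (cases "mpoly_apply A q y = 0")
        case True
        then show ?thesis using less.hyps[OF dq q0] by blast
      next
        case False
        have "A *v mpoly_apply A q y - r *s mpoly_apply A q y = 0"
          using less.prems(2) unfolding pq mpoly_apply_linear_factor .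
        then show ?thesis using False by auto
      qed
    qed
  qed
  then show ?thesis using annihilating_polynomial by blast
qed

section \<open>Orthonormal bases and the spectral theorem for unitary matrices\<close>

definition orthonormal :: "(complex^'n) set \<Rightarrow> bool" where
  "orthonormal B \<longleftrightarrow> finite B \<and> (\<forall>b\<in>B. hinner b b = 1)
     \<and> (\<forall>b\<in>B. \<forall>c\<in>B. b \<noteq> c \<longrightarrow> hinner b c = 0)"

definition orthonormal_basis :: "(complex^'n) set \<Rightarrow> bool" where
  "orthonormal_basis B \<longleftrightarrow> orthonormal B \<and> (\<forall>x. x = (\<Sum>b\<in>B. hinner x b *s b))"

lemma orthonormal_nonzero: "orthonormal B \<Longrightarrow> b \<in> B \<Longrightarrow> b \<noteq> 0"
  by (auto simp: orthonormal_def)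

lemma orthonormal_coefficient:
  assumes "orthonormal B" "b \<in> B"
  shows "hinner (\<Sum>c\<in>B. f c *s c) b = f b"
proof -
  have "hinner (\<Sum>c\<in>B. f c *s c) b = (\<Sum>c\<in>B. if c = b then f b else 0)"
    unfolding hinner_sum_left hinner_scale_left
    by (rule sum.cong) (use assms in \<open>auto simp: orthonormal_def\<close>)
  then show ?thesis
    using assms by (simp add: orthonormal_def)
qed

lemma orthonormal_card: "orthonormal (B :: (complex^'n) set) \<Longrightarrow> card B \<le> CARD('n)"
proof -
  assume B: "orthonormal B"
  have "vec.independent B"
  proof (rule vec.independent_if_scalars_zero)
    show "finite B" using B by (simp add: orthonormal_def)
    fix f x assume "(\<Sum>x\<in>B. f x *s x) = 0" and "x \<in> B"
    then show "f x = 0" using orthonormal_coefficient[OF B, of x f] by simp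
  qed
  then show ?thesis
    using vec.independent_card_le_dim[of B UNIV] by (simp add: card_cart_basis)
qed

lemma orthonormal_norm_sum:
  assumes "orthonormal B"
  shows "(norm (\<Sum>b\<in>B. c b *s b))\<^sup>2 = (\<Sum>b\<in>B. (cmod (c b))\<^sup>2)"
proof -
  let ?S = "\<Sum>b\<in>B. c b *s b"
  have "hinner ?S ?S = (\<Sum>b\<in>B. cnj (c b) * hinner ?S b)"
    by (simp add: hinner_sum_right hinner_scale_right)
  also have "\<dots> = (\<Sum>b\<in>B. complex_of_real ((cmod (c b))\<^sup>2))"
    by (rule sum.cong) (use assms in \<open>auto simp: orthonormal_coefficient,
        metis complex_norm_square mult.commute of_real_power\<close>)
  finally have "complex_of_real ((norm ?S)\<^sup>2) = complex_of_real (\<Sum>b\<in>B. (cmod (c b))\<^sup>2)"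
    by (simp add: hinner_self)
  then show ?thesis
    using of_real_eq_iff by blast
qed

text \<open>Krylov vectors of a vector orthogonal to an eigenvector of a unitary matrix stay orthogonal
  to it, because that eigenvector is also an eigenvector of the adjoint.\<close>
lemma krylov_orthogonal:
  assumes "unitary_op W" "W *v b = l *s b" "b \<noteq> 0" "hinner y b = 0"
  shows "hinner (mpoly_apply W q y) b = 0"
proof -
  have "hinner (matpow W k *v y) b = 0" for k
  proof (induction k)
    case (Suc k)
    have "hinner (matpow W (Suc k) *v y) b = hinner (matpow W k *v y) (conj_transpose W *v b)"
      by (simp add: matrix_vector_mul_assoc[symmetric] hinner_adjoint)
    then show ?case
      using Suc unitary_eigenvalue(2)[OF assms(1-3)] by (simp add: hinner_scale_right)
  qed (use assms(4) in simp)
  then show ?thesis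
    by (simp add: mpoly_apply_def hinner_sum_left hinner_scale_left)
qed

lemma orthogonal_unit_eigenvector:
  assumes W: "unitary_op W" and B: "orthonormal B" and eig: "\<forall>b\<in>B. \<exists>l. W *v b = l *s b"
    and y: "y \<noteq> 0" "\<forall>b\<in>B. hinner y b = 0"
  shows "\<exists>e r. hinner e e = 1 \<and> (\<forall>b\<in>B. hinner e b = 0) \<and> W *v e = r *s e"
proof -
  obtain q r where z0: "mpoly_apply W q y \<noteq> 0"
    and zr: "W *v mpoly_apply W q y = r *s mpoly_apply W q y"
    using eigenvector_in_krylov_space[OF y(1)] by blast
  define z where "z = mpoly_apply W q y"
  define e where "e = complex_of_real (1 / norm z) *s z"
  have "hinner z b = 0" if "b \<in> B" for b
  proof -
    from eig that obtain l where "W *v b = l *s b" by blast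
    moreover have "b \<noteq> 0" "hinner y b = 0"
      using orthonormal_nonzero[OF B] y(2) that by auto
    ultimately show ?thesis
      unfolding z_def by (rule krylov_orthogonal[OF W])
  qed
  then have "\<forall>b\<in>B. hinner e b = 0"
    by (simp add: e_def hinner_scale_left)
  moreover have "hinner e e = 1"
    using z0 unfolding z_def[symmetric]
    by (simp only: e_def hinner_scale_left hinner_scale_right hinner_self[of z])
      (simp add: power2_eq_square)
  moreover have "W *v e = r *s e"
    using zr by (simp add: e_def z_def vec.scale vector_smult_assoc mult.commute)
  ultimately show ?thesis by blast
qed

text \<open>Spectral theorem: a unitary matrix has an orthonormal eigenbasis.  Take a maximal
  orthonormal family of eigenvectors; a nonzero residual would extend it.\<close>
theorem unitary_eigenbasis:
  assumes W: "unitary_op W"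
  shows "\<exists>B l. orthonormal_basis B \<and> (\<forall>b\<in>B. W *v b = l b *s b)"
proof -
  define P where "P B \<longleftrightarrow> orthonormal B \<and> (\<forall>b\<in>B. \<exists>l. W *v b = l *s b)" for B
  have "P {}" by (simp add: P_def orthonormal_def)
  then obtain B where B: "P B" and maximal: "\<And>B'. P B' \<Longrightarrow> card B' \<le> card B"
    using ex_has_greatest_nat[of P "{}" card "Suc CARD('n)"] orthonormal_card
    by (metis P_def less_Suc_eq_le)
  have "x = (\<Sum>b\<in>B. hinner x b *s b)" for x
  proof (rule ccontr)
    define y where "y = x - (\<Sum>b\<in>B. hinner x b *s b)"
    assume "x \<noteq> (\<Sum>b\<in>B. hinner x b *s b)"
    then have "y \<noteq> 0" by (simp add: y_def)
    moreover have "\<forall>b\<in>B. hinner y b = 0"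
      using B by (simp add: P_def y_def hinner_diff_left orthonormal_coefficient)
    ultimately obtain e r where e: "hinner e e = 1" "\<forall>b\<in>B. hinner e b = 0" "W *v e = r *s e"
      using orthogonal_unit_eigenvector[OF W] B by (metis P_def)
    have "e \<notin> B" using e by force
    moreover have "\<forall>b\<in>B. hinner b e = 0"
      using e(2) by (metis hinner_commute complex_cnj_zero)
    then have "P (insert e B)"
      using B e by (auto simp: P_def orthonormal_def)
    ultimately show False
      using maximal[of "insert e B"] B by (simp add: P_def orthonormal_def)
  qed
  then have "orthonormal_basis B"
    using B by (simp add: P_def orthonormal_basis_def)
  moreover have "\<exists>l. \<forall>b\<in>B. W *v b = l b *s b"
    using B unfolding P_def by (intro bchoice) blast
  ultimately show ?thesis by blast
qed

section \<open>Norm estimates: diagonal operators and powers of nearby isometries\<close>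

lemma diagonal_norm_sq:
  assumes B: "orthonormal_basis B" and A: "\<And>b. b \<in> B \<Longrightarrow> A *v b = \<phi> b *s b"
  shows "(norm (A *v x))\<^sup>2 = (\<Sum>b\<in>B. (cmod (hinner x b))\<^sup>2 * (cmod (\<phi> b))\<^sup>2)"
proof -
  have "A *v x = A *v (\<Sum>b\<in>B. hinner x b *s b)"
    using B by (metis orthonormal_basis_def)
  also have "\<dots> = (\<Sum>b\<in>B. (hinner x b * \<phi> b) *s b)"
    by (simp add: vec.sum vec.scale A vector_smult_assoc)
  finally show ?thesis
    using B orthonormal_norm_sum[of B "\<lambda>b. hinner x b * \<phi> b"]
    by (simp add: orthonormal_basis_def norm_mult power_mult_distrib)
qed

lemma parseval:
  "orthonormal_basis B \<Longrightarrow> (norm x)\<^sup>2 = (\<Sum>b\<in>B. (cmod (hinner x b))\<^sup>2)"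
  using diagonal_norm_sq[of B "mat 1" "\<lambda>b. 1" x] by simp

lemma diagonal_norm_le:
  assumes B: "orthonormal_basis B" and A: "\<And>b. b \<in> B \<Longrightarrow> A *v b = \<phi> b *s b"
    and M: "\<And>b. b \<in> B \<Longrightarrow> cmod (\<phi> b) \<le> M"
  shows "norm (A *v x) \<le> M * norm x"
proof (cases "B = {}")
  case True
  then have "x = 0"
    using B by (metis orthonormal_basis_def sum.empty)
  then show ?thesis by simp
next
  case False
  then have M0: "0 \<le> M" using M norm_ge_zero order_trans by blast
  have "(norm (A *v x))\<^sup>2 = (\<Sum>b\<in>B. (cmod (hinner x b))\<^sup>2 * (cmod (\<phi> b))\<^sup>2)"
    by (rule diagonal_norm_sq[OF B A])
  also have "\<dots> \<le> (\<Sum>b\<in>B. (cmod (hinner x b))\<^sup>2 * M\<^sup>2)"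
    by (intro sum_mono mult_left_mono power_mono) (auto simp: M)
  also have "\<dots> = (M * norm x)\<^sup>2"
    by (simp add: parseval[OF B] sum_distrib_left power_mult_distrib mult.commute)
  finally show ?thesis
    by (rule power2_le_imp_le) (use M0 in simp)
qed

lemma diagonal_small_entry:
  assumes B: "orthonormal_basis B" and A: "\<And>b. b \<in> B \<Longrightarrow> A *v b = \<phi> b *s b"
    and x: "norm x = 1" and small: "norm (A *v x) \<le> e"
  shows "\<exists>b\<in>B. cmod (\<phi> b) \<le> e"
proof -
  have fin: "finite B" using B by (simp add: orthonormal_basis_def orthonormal_def)
  have unit: "(\<Sum>b\<in>B. (cmod (hinner x b))\<^sup>2) = 1"
    using parseval[OF B, of x] x by simp
  then have "B \<noteq> {}" by auto
  define m where "m = Min ((\<lambda>b. cmod (\<phi> b)) ` B)"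
  have "m\<^sup>2 = (\<Sum>b\<in>B. (cmod (hinner x b))\<^sup>2 * m\<^sup>2)"
    by (simp add: sum_distrib_right[symmetric] unit)
  also have "\<dots> \<le> (\<Sum>b\<in>B. (cmod (hinner x b))\<^sup>2 * (cmod (\<phi> b))\<^sup>2)"
    using fin \<open>B \<noteq> {}\<close>
    by (intro sum_mono mult_left_mono power_mono) (auto simp: m_def)
  also have "\<dots> = (norm (A *v x))\<^sup>2"
    by (rule diagonal_norm_sq[OF B A, symmetric])
  also have "\<dots> \<le> e\<^sup>2"
    using small by (intro power_mono) auto
  finally have "m \<le> e"
    by (rule power2_le_imp_le) (use small norm_ge_zero order_trans in blast)
  moreover have "m \<in> (\<lambda>b. cmod (\<phi> b)) ` B"
    unfolding m_def using fin \<open>B \<noteq> {}\<close> by (intro Min_in) auto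
  ultimately show ?thesis by auto
qed

text \<open>Telescoping: powers of two close isometries stay close.\<close>
lemma matpow_perturbation:
  assumes "unitary_op A" "unitary_op B" "\<And>x. norm ((A - B) *v x) \<le> e * norm x"
  shows "norm ((matpow A m - matpow B m) *v x) \<le> m * e * norm x"
proof (induction m arbitrary: x)
  case (Suc m)
  have "(matpow A (Suc m) - matpow B (Suc m)) *v x
          = A *v ((matpow A m - matpow B m) *v x) + (A - B) *v (matpow B m *v x)"
    by (simp add: matrix_vector_mult_diff_rdistrib matrix_vector_mul_assoc[symmetric] vec.diff)
  then have "norm ((matpow A (Suc m) - matpow B (Suc m)) *v x)
      \<le> norm (A *v ((matpow A m - matpow B m) *v x)) + norm ((A - B) *v (matpow B m *v x))"
    by (simp only: norm_triangle_ineq)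
  also have "\<dots> \<le> norm ((matpow A m - matpow B m) *v x) + e * norm (matpow B m *v x)"
    unfolding unitary_isometry[OF assms(1)] by (rule add_left_mono) (rule assms(3))
  also have "\<dots> \<le> m * e * norm x + e * norm x"
    using Suc.IH unitary_isometry[OF unitary_matpow[OF assms(2)]] by simp
  finally show ?case by (simp add: algebra_simps)
qed simp

section \<open>Approximate dynamics z \<mapsto> root of z^3 on the unit circle\<close>

lemma orbit_error:
  fixes g :: "complex \<Rightarrow> complex"
  assumes g: "\<And>m. m \<in> S \<Longrightarrow> g m \<in> S \<and> cmod (m^3 - (g m)\<^sup>2) \<le> e"
    and unit: "\<And>m. m \<in> S \<Longrightarrow> cmod m = 1"
    and m: "m \<in> S"
  shows "cmod (m^(3^j) - ((g^^j) m)^(2^j)) \<le> 3^j * e"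
  using m
proof (induction j arbitrary: m)
  case 0
  then show ?case
    using g[OF 0] by (auto intro: order_trans[OF norm_ge_zero])
next
  case (Suc j)
  let ?n = "g m" and ?r = "(g^^j) (g m)"
  have n: "?n \<in> S" using g Suc.prems by blast
  have rS: "?r \<in> S" using n g by (induction j) auto
  have "cmod ((m^3)^(3^j) - (?n\<^sup>2)^(3^j)) \<le> 3^j * cmod (m^3 - ?n\<^sup>2)"
    using norm_power_diff[of "m^3" "?n\<^sup>2" "3^j"] unit Suc.prems n by (simp add: norm_power)
  also have "\<dots> \<le> 3^j * e"
    using g Suc.prems by (intro mult_left_mono) auto
  finally have e1: "cmod ((m^3)^(3^j) - (?n\<^sup>2)^(3^j)) \<le> 3^j * e" .
  have "cmod ((?n^(3^j))\<^sup>2 - (?r^(2^j))\<^sup>2) \<le> 2 * cmod (?n^(3^j) - ?r^(2^j))"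
    using norm_power_diff[of "?n^(3^j)" "?r^(2^j)" 2] unit n rS by (simp add: norm_power)
  also have "\<dots> \<le> 2 * (3^j * e)"
    using Suc.IH[OF n] by simp
  finally have e2: "cmod ((?n^(3^j))\<^sup>2 - (?r^(2^j))\<^sup>2) \<le> 2 * (3^j * e)" .
  have split: "m^(3^Suc j) - ?r^(2^Suc j)
          = ((m^3)^(3^j) - (?n\<^sup>2)^(3^j)) + ((?n^(3^j))\<^sup>2 - (?r^(2^j))\<^sup>2)"
  proof -
    have "m^(3^Suc j) = (m^3)^(3^j)" and "(?n\<^sup>2)^(3^j) = (?n^(3^j))\<^sup>2"
      and "?r^(2^Suc j) = (?r^(2^j))\<^sup>2"
      by (simp_all add: power_mult[symmetric] mult.commute)
    then show ?thesis by (simp only:) simp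
  qed
  have "cmod (m^(3^Suc j) - ?r^(2^Suc j))
          \<le> cmod ((m^3)^(3^j) - (?n\<^sup>2)^(3^j)) + cmod ((?n^(3^j))\<^sup>2 - (?r^(2^j))\<^sup>2)"
    unfolding split by (rule norm_triangle_ineq)
  also have "\<dots> \<le> 3^j * e + 2 * (3^j * e)"
    using e1 e2 by (rule add_mono)
  also have "\<dots> = 3^Suc j * e"
    by simp
  finally show ?case
    unfolding funpow_Suc_right comp_def .
qed

lemma periodic_point_near_root_of_unity:
  fixes g :: "complex \<Rightarrow> complex"
  assumes g: "\<And>m. m \<in> S \<Longrightarrow> g m \<in> S \<and> cmod (m^3 - (g m)\<^sup>2) \<le> e"
    and unit: "\<And>m. m \<in> S \<Longrightarrow> cmod m = 1"
    and n: "n \<in> S" and period: "(g^^k) n = n" and k: "1 \<le> k"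
    and dvd: "(3^k - 2^k) dvd L"
  shows "cmod (n^L - 1) \<le> 3 * real L * e"
proof -
  define t where "t = (3::nat)^k - 2^k"
  obtain q where L: "L = t * q" using dvd by (auto simp: t_def elim: dvdE)
  have "(2::nat)^k \<le> 3^k" by (rule power_mono) auto
  then have t3: "(3::nat)^k = 2^k + t" by (simp add: t_def)
  have un: "cmod n = 1" using unit n by simp
  have e0: "0 \<le> e"
    using g[OF n] by (meson norm_ge_zero order_trans)
  have three: "(3::real)^k \<le> 3 * t"
  proof -
    obtain k' where "k = Suc k'" using k by (cases k) auto
    moreover have "(2::real)^k' \<le> 3^k'" by (rule power_mono) auto
    ultimately show ?thesis using t3 by (simp add: of_nat_diff t_def)
  qed
  have "n^(3^k) - n^(2^k) = n^(2^k) * (n^t - 1)"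
    by (simp add: t3 power_add algebra_simps)
  then have "cmod (n^t - 1) \<le> 3^k * e"
    using orbit_error[OF g unit n, of k] period by (simp add: norm_mult norm_power un)
  also have "\<dots> \<le> 3 * t * e"
    using three e0 by (rule mult_right_mono)
  finally have root_t: "cmod (n^t - 1) \<le> 3 * t * e" .
  have "cmod ((n^t)^q - 1^q) \<le> q * cmod (n^t - 1)"
    by (rule norm_power_diff) (auto simp: norm_power un)
  also have "\<dots> \<le> q * (3 * t * e)"
    using root_t by (intro mult_left_mono) auto
  also have "\<dots> = 3 * real L * e"
    by (simp add: L)
  finally show ?thesis
    by (simp add: L power_mult)
qed

text \<open>Pigeonhole: an orbit in a set of at most d points enters a cycle of length at most d
  after at most d steps.\<close>
lemma orbit_enters_cycle:
  assumes fin: "finite S" and card: "card S \<le> d"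
    and g: "\<And>m. m \<in> S \<Longrightarrow> g m \<in> S" and m: "m \<in> S"
  shows "\<exists>a k. a \<le> d \<and> 1 \<le> k \<and> k \<le> d \<and> (g^^k) ((g^^a) m) = (g^^a) m"
proof -
  have orbit: "(g^^i) m \<in> S" for i using g m by (induction i) auto
  have "\<not> inj_on (\<lambda>i. (g^^i) m) {..card S}"
  proof
    assume "inj_on (\<lambda>i. (g^^i) m) {..card S}"
    then have "card {..card S} \<le> card S"
      by (rule card_inj_on_le) (use orbit fin in auto)
    then show False by simp
  qed
  then obtain a b where ab: "a < b" "b \<le> card S" "(g^^a) m = (g^^b) m"
    by (auto simp: inj_on_def) (metis linorder_neqE_nat)
  have "(g^^(b - a)) ((g^^a) m) = (g^^(b - a + a)) m"
    by (simp add: funpow_add)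
  also have "\<dots> = (g^^a) m"
    using ab by simp
  finally have "(g^^(b - a)) ((g^^a) m) = (g^^a) m" .
  then show ?thesis
    using ab card by (intro exI[of _ a] exI[of _ "b - a"]) auto
qed

text \<open>If the a-th iterate of m is close to an L-th root of unity, then m is close to a
  (3^a L)-th root of unity: compare m^(3^a) with the 2^a-th power of that iterate.\<close>
lemma orbit_preimage_near_root_of_unity:
  fixes g :: "complex \<Rightarrow> complex"
  assumes g: "\<And>m. m \<in> S \<Longrightarrow> g m \<in> S \<and> cmod (m^3 - (g m)\<^sup>2) \<le> e"
    and unit: "\<And>m. m \<in> S \<Longrightarrow> cmod m = 1"
    and m: "m \<in> S" and near: "cmod (((g^^a) m)^L - 1) \<le> 3 * real L * e"
  shows "cmod (m^(3^a * L) - 1) \<le> 4 * real L * 3^a * e"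
proof -
  define n where "n = (g^^a) m"
  have "n \<in> S" unfolding n_def using g m by (induction a) auto
  then have un: "cmod n = 1" and um: "cmod m = 1" using unit m by auto
  have e0: "0 \<le> e" using g[OF m] by (meson norm_ge_zero order_trans)
  have "cmod ((m^(3^a))^L - (n^(2^a))^L) \<le> L * cmod (m^(3^a) - n^(2^a))"
    by (rule norm_power_diff) (auto simp: norm_power un um)
  also have "\<dots> \<le> L * (3^a * e)"
    using orbit_error[OF g unit m, of a] by (intro mult_left_mono) (auto simp: n_def)
  finally have c1: "cmod (m^(3^a * L) - n^(2^a * L)) \<le> L * 3^a * e"
    by (simp add: power_mult)
  have "cmod ((n^L)^(2^a) - 1^(2^a)) \<le> 2^a * cmod (n^L - 1)"
    using norm_power_diff[of "n^L" 1 "2^a"] by (simp add: norm_power un)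
  also have "\<dots> \<le> 3^a * (3 * real L * e)"
    using near e0 by (intro mult_mono power_mono) (auto simp: n_def)
  finally have c2: "cmod (n^(2^a * L) - 1) \<le> 3 * L * 3^a * e"
    by (simp add: power_mult[symmetric] mult.commute mult.left_commute)
  show ?thesis
    using norm_triangle_ineq[of "m^(3^a * L) - n^(2^a * L)" "n^(2^a * L) - 1"] c1 c2 by simp
qed

text \<open>The orbit of m reaches a cycle of length
  k \<le> d after a \<le> d steps, and 3^a (3^k - 2^k) divides N.\<close>
theorem approximate_dynamics_root_of_unity:
  fixes g :: "complex \<Rightarrow> complex"
  assumes fin: "finite S" and card: "card S \<le> d"
    and g: "\<And>m. m \<in> S \<Longrightarrow> g m \<in> S \<and> cmod (m^3 - (g m)\<^sup>2) \<le> e"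
    and unit: "\<And>m. m \<in> S \<Longrightarrow> cmod m = 1"
    and m: "m \<in> S"
  shows "cmod (m^(N_const d) - 1) \<le> 4 * real (N_const d) * e"
proof -
  define L where "L = Lcm ((\<lambda>k. 3^k - 2^k) ` {1..d} :: nat set)"
  obtain a k where a: "a \<le> d" and k: "1 \<le> k" "k \<le> d" and cyc: "(g^^k) ((g^^a) m) = (g^^a) m"
    using orbit_enters_cycle[OF fin card _ m] g by blast
  have "(g^^a) m \<in> S" using g m by (induction a) auto
  moreover have "(3^k - 2^k) dvd L"
    unfolding L_def by (rule dvd_Lcm, rule image_eqI[where x = k]) (use k in auto)
  ultimately have "cmod (((g^^a) m)^L - 1) \<le> 3 * real L * e"
    using g unit cyc k(1) by (intro periodic_point_near_root_of_unity)
  with g unit m have near: "cmod (m^(3^a * L) - 1) \<le> 4 * real L * 3^a * e"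
    by (rule orbit_preimage_near_root_of_unity)
  have N: "N_const d = 3^a * L * 3^(d - a)"
    using a by (simp add: N_const_def L_def power_add[symmetric])
  have "cmod ((m^(3^a * L))^(3^(d-a)) - 1^(3^(d-a))) \<le> 3^(d-a) * cmod (m^(3^a * L) - 1)"
    using norm_power_diff[of "m^(3^a * L)" 1 "3^(d-a)"] unit[OF m] by (simp add: norm_power)
  also have "\<dots> \<le> 3^(d-a) * (4 * L * 3^a * e)"
    using near by (intro mult_left_mono) auto
  finally show ?thesis
    by (simp add: N power_mult algebra_simps)
qed

lemma N_const_odd: "odd (N_const d)"
proof -
  define A where "A = (\<lambda>k. (3::nat)^k - 2^k) ` {1..d}"
  have "odd a" if a: "a \<in> A" for a
  proof -
    obtain k where k: "k \<ge> 1" "a = 3^k - 2^k" using a by (auto simp: A_def)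
    have "(2::nat)^k \<le> 3^k" by (rule power_mono) auto
    then have "(3::nat)^k = 2^k + a" using k by simp
    moreover have "odd ((3::nat)^k)" and "even ((2::nat)^k)"
      using k(1) by simp_all
    ultimately show ?thesis by (metis even_add)
  qed
  then have "odd (prod id A)"
    by (simp add: A_def even_prod_iff)
  moreover have "Lcm A dvd prod id A"
    by (rule Lcm_least) (auto simp: A_def intro: dvd_prodI[of _ _ id, simplified])
  ultimately have "odd (Lcm A)"
    by (meson dvd_trans)
  then show ?thesis
    by (simp add: N_const_def A_def)
qed

section \<open>From the spectrum to operator estimates\<close>

locale almost_cube_root =
  fixes U V W :: "complex^'n^'n" and d :: nat and e :: real
  assumes unitary_U: "unitary_op U" and unitary_V: "unitary_op V"
    and W_def: "W = conj_transpose V ** U ** V"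
    and dim: "CARD('n) \<le> d"
    and close: "\<And>y. norm ((matpow W 2 - matpow U 3) *v y) \<le> e * norm y"
    and nonneg: "0 \<le> e"
begin

lemma unitary_W: "unitary_op W"
  unfolding W_def by (intro unitary_mult unitary_conj_transpose unitary_U unitary_V)

lemma eigenvalue_unit:
  assumes B: "orthonormal_basis B" and eig: "\<And>b. b \<in> B \<Longrightarrow> W *v b = l b *s b"
    and b: "b \<in> B"
  shows "cmod (l b) = 1"
  using unitary_eigenvalue(1)[OF unitary_W eig[OF b]] orthonormal_nonzero B b
  by (auto simp: orthonormal_basis_def)

lemma eigenvector_of_U:
  assumes "W *v b = \<mu> *s b"
  shows "U *v (V *v b) = \<mu> *s (V *v b)"
proof -
  have "V ** conj_transpose V = mat 1" using unitary_V by (simp add: unitary_op_def)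
  then have "V *v (W *v b) = U *v (V *v b)"
    by (simp add: W_def matrix_vector_mul_assoc matrix_mul_assoc)
  then show ?thesis using assms by (simp add: vec.scale)
qed

text \<open>Each eigenvalue \<mu> of W has an eigenvalue \<nu> of W with \<nu>^2 close to \<mu>^3: test
  W^2 - \<mu>^3 on the unit eigenvector V b of U.\<close>
lemma eigenvalue_successor:
  assumes B: "orthonormal_basis B" and eig: "\<And>b. b \<in> B \<Longrightarrow> W *v b = l b *s b"
    and b: "b \<in> B"
  shows "\<exists>c\<in>B. cmod (l b ^ 3 - (l c)\<^sup>2) \<le> e"
proof -
  define x where "x = V *v b"
  have "hinner b b = 1" using B b by (simp add: orthonormal_basis_def orthonormal_def)
  then have "norm x = 1"
    by (simp add: x_def unitary_isometry[OF unitary_V] hinner_self_eq_1)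
  have U3: "matpow U 3 *v x = (l b)^3 *s x"
    by (rule matpow_eigenvector) (use eigenvector_of_U[OF eig[OF b]] in \<open>simp add: x_def\<close>)
  have diag: "(matpow W 2 - mat ((l b)^3)) *v c = ((l c)\<^sup>2 - (l b)^3) *s c" if "c \<in> B" for c
    by (simp add: matrix_vector_mult_diff_rdistrib mat_scalar_vec matpow_eigenvector[OF eig[OF that]]
        vec.scale_left_diff_distrib)
  have "(matpow W 2 - mat ((l b)^3)) *v x = (matpow W 2 - matpow U 3) *v x"
    by (simp add: matrix_vector_mult_diff_rdistrib mat_scalar_vec U3)
  then have "norm ((matpow W 2 - mat ((l b)^3)) *v x) \<le> e"
    using close[of x] \<open>norm x = 1\<close> by simp
  then show ?thesis
    using diagonal_small_entry[OF B diag \<open>norm x = 1\<close>] by (auto simp: norm_minus_commute)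
qed

text \<open>Consequently every eigenvalue of W is within 4 N e of an N-th root of unity: the
  eigenvalues form a set of at most d points on the unit circle carrying an approximate
  map m^3 \<approx> (g m)^2.\<close>
lemma eigenvalues_near_roots_of_unity:
  assumes B: "orthonormal_basis B" and eig: "\<And>b. b \<in> B \<Longrightarrow> W *v b = l b *s b"
    and b: "b \<in> B"
  shows "cmod ((l b)^(N_const d) - 1) \<le> 4 * real (N_const d) * e"
proof -
  have "\<forall>m\<in>l ` B. \<exists>n. n \<in> l ` B \<and> cmod (m^3 - n\<^sup>2) \<le> e"
    using eigenvalue_successor[OF B eig] by fast
  from bchoice[OF this] obtain g
    where g: "\<And>m. m \<in> l ` B \<Longrightarrow> g m \<in> l ` B \<and> cmod (m^3 - (g m)\<^sup>2) \<le> e"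
    by blast
  have fin: "finite (l ` B)"
    using B by (simp add: orthonormal_basis_def orthonormal_def)
  have card: "card (l ` B) \<le> d"
    using card_image_le[of B l] orthonormal_card[of B] dim B
    by (auto simp: orthonormal_basis_def orthonormal_def)
  have unit: "\<And>m. m \<in> l ` B \<Longrightarrow> cmod m = 1"
    using eigenvalue_unit[OF B eig] by blast
  show ?thesis
    using fin card g unit imageI[OF b] by (rule approximate_dynamics_root_of_unity)
qed

text \<open>Hence W^(N+1) is within 4 N e of W, as W is diagonal in an orthonormal eigenbasis.\<close>
lemma power_close_to_W:
  "norm ((matpow W (N_const d + 1) - W) *v y) \<le> 4 * real (N_const d) * e * norm y"
proof -
  obtain B l where B: "orthonormal_basis B" and eig: "\<And>b. b \<in> B \<Longrightarrow> W *v b = l b *s b"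
    using unitary_eigenbasis[OF unitary_W] by blast
  show ?thesis
  proof (rule diagonal_norm_le[OF B])
    show "(matpow W (N_const d + 1) - W) *v b = ((l b)^(N_const d + 1) - l b) *s b"
      if "b \<in> B" for b
      using matpow_eigenvector[OF eig[OF that], of "N_const d + 1"] eig[OF that]
      by (simp only: matrix_vector_mult_diff_rdistrib vec.scale_left_diff_distrib)
    show "cmod ((l b)^(N_const d + 1) - l b) \<le> 4 * real (N_const d) * e" if "b \<in> B" for b
    proof -
      have "(l b)^(N_const d + 1) - l b = l b * ((l b)^(N_const d) - 1)"
        by (simp add: algebra_simps)
      moreover have "cmod (l b) = 1"
        by (rule eigenvalue_unit[OF B eig that])
      ultimately show ?thesis
        using eigenvalues_near_roots_of_unity[OF B eig that] by (simp add: norm_mult)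
    qed
  qed
qed

text \<open>W is within 5 N e of a power of U: since N is odd, W^(N+1) = (W^2)^k with
  k = (N+1)/2 \<le> N, and (W^2)^k is within k e of (U^3)^k.\<close>
lemma W_close_to_power_of_U:
  "\<exists>j. \<forall>y. norm ((W - matpow U j) *v y) \<le> 5 * real (N_const d) * e * norm y"
proof -
  define N where "N = N_const d"
  define k where "k = (N + 1) div 2"
  have k2: "N + 1 = 2 * k" using N_const_odd by (simp add: k_def N_def)
  have kN: "real k + 4 * real N \<le> 5 * real N"
    using k2 by simp
  have "norm ((matpow (matpow W 2) k - matpow (matpow U 3) k) *v y) \<le> k * e * norm y" for y
    by (rule matpow_perturbation[OF unitary_matpow[OF unitary_W] unitary_matpow[OF unitary_U]])
      (rule close)
  then have near: "norm ((matpow W (N + 1) - matpow U (3 * k)) *v y) \<le> k * e * norm y" for y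
    by (simp only: k2 matpow_mult)
  have "norm ((W - matpow U (3 * k)) *v y) \<le> 5 * real N * e * norm y" for y
  proof -
    have "(W - matpow U (3 * k)) *v y
            = (matpow W (N + 1) - matpow U (3 * k)) *v y - (matpow W (N + 1) - W) *v y"
      by (simp add: matrix_vector_mult_diff_rdistrib)
    then have "norm ((W - matpow U (3 * k)) *v y) \<le> norm ((matpow W (N + 1) - matpow U (3 * k)) *v y)
                                             + norm ((matpow W (N + 1) - W) *v y)"
      by (simp only: norm_triangle_ineq4)
    also have "\<dots> \<le> k * e * norm y + 4 * real N * e * norm y"
      unfolding N_def by (intro add_mono near[unfolded N_def] power_close_to_W)
    also have "\<dots> = (real k + 4 * real N) * e * norm y"
      by (simp add: algebra_simps)
    also have "\<dots> \<le> 5 * real N * e * norm y"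
      using kN nonneg by (intro mult_right_mono) auto
    finally show ?thesis .
  qed
  then show ?thesis unfolding N_def by blast
qed

end

lemma commutator_bound:
  assumes U: "unitary_op U" and comm: "U ** P = P ** U"
    and close: "\<And>y. norm ((W - P) *v y) \<le> c * norm y"
  shows "norm ((U ** W - W ** U) *v x) \<le> 2 * c * norm x"
proof -
  have PU: "P *v (U *v x) = U *v (P *v x)"
    by (simp add: matrix_vector_mul_assoc comm)
  have "(U ** W - W ** U) *v x = U *v (W *v x) - W *v (U *v x)"
    by (simp add: matrix_vector_mult_diff_rdistrib matrix_vector_mul_assoc)
  also have "\<dots> = U *v ((W - P) *v x) - (W - P) *v (U *v x)"
    using PU by (simp add: matrix_vector_mult_diff_rdistrib vec.diff)
  finally have "norm ((U ** W - W ** U) *v x)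
               \<le> norm (U *v ((W - P) *v x)) + norm ((W - P) *v (U *v x))"
    by (simp only: norm_triangle_ineq4)
  also have "\<dots> \<le> c * norm x + c * norm x"
    using close[of x] close[of "U *v x"] unitary_isometry[OF U] by simp
  finally show ?thesis by simp
qed

lemma conjugate_identities:
  fixes U V :: "complex^'n^'n"
  assumes "unitary_op V"
  defines "W \<equiv> conj_transpose V ** U ** V"
  shows "matrix_inv V ** U ** U ** V - U ** U ** U = matpow W 2 - matpow U 3"
    and "U ** matrix_inv V ** U ** V - matrix_inv V ** U ** V ** U = U ** W - W ** U"
proof -
  have Vinv: "matrix_inv V = conj_transpose V"
    using assms(1) by (rule unitary_matrix_inv)
  have "V ** conj_transpose V = mat 1"
    using assms(1) by (simp add: unitary_op_def)
  then have cancel: "X ** V ** conj_transpose V = X" for X :: "complex^'n^'n"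
    by (simp add: matrix_mul_assoc[symmetric])
  show "matrix_inv V ** U ** U ** V - U ** U ** U = matpow W 2 - matpow U 3"
    by (simp add: Vinv W_def numeral_2_eq_2 numeral_3_eq_3 matrix_mul_assoc cancel)
  show "U ** matrix_inv V ** U ** V - matrix_inv V ** U ** V ** U = U ** W - W ** U"
    by (simp add: Vinv W_def matrix_mul_assoc)
qed

theorem theorem2:
  fixes d :: nat and U V :: "complex^'n^'n" and \<epsilon> :: real
  assumes "d \<ge> 3"
    and "CARD('n) \<le> d"
    and "unitary_op U" and "unitary_op V"
    and "op_norm (matrix_inv V ** U ** U ** V - U ** U ** U) < \<epsilon>"
    and "0 < \<epsilon>" and "\<epsilon> < 1 / (6 * 3 ^ d * real d * real (N_const d))"
  shows "op_norm (U ** matrix_inv V ** U ** V - matrix_inv V ** U ** V ** U)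
           < 4 * real d ^ 3 * real (N_const d) * \<epsilon>"
proof -
  define W where "W = conj_transpose V ** U ** V"
  define e where "e = op_norm (matpow W 2 - matpow U 3)"
  have "e < \<epsilon>"
    using assms(5) conjugate_identities(1)[OF assms(4)] by (simp add: e_def W_def)
  have "0 \<le> e"
    unfolding e_def op_norm_def by (rule onorm_pos_le[OF matrix_vector_mul_bounded_linear])
  then interpret almost_cube_root U V W d e
    using assms(2-4) onorm[OF matrix_vector_mul_bounded_linear]
    by unfold_locales (simp_all add: W_def e_def op_norm_def)
  obtain j where "\<And>y. norm ((W - matpow U j) *v y) \<le> 5 * real (N_const d) * e * norm y"
    using W_close_to_power_of_U by blast
  then have "norm ((U ** W - W ** U) *v x) \<le> 2 * (5 * real (N_const d) * e) * norm x" for x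
    by (rule commutator_bound[OF unitary_U matpow_commute])
  then have "op_norm (U ** W - W ** U) \<le> 10 * real (N_const d) * e"
    unfolding op_norm_def by (intro onorm_le) (simp add: mult.assoc)
  also have "\<dots> \<le> 4 * real d ^ 3 * real (N_const d) * e"
    using \<open>d \<ge> 3\<close> power_mono[of 3 "real d" 3] \<open>0 \<le> e\<close> by (intro mult_right_mono) auto
  also have "\<dots> < 4 * real d ^ 3 * real (N_const d) * \<epsilon>"
    using \<open>e < \<epsilon>\<close> \<open>d \<ge> 3\<close> odd_pos[OF N_const_odd] by (intro mult_strict_left_mono) auto
  finally show ?thesis
    using conjugate_identities(2)[OF assms(4)] by (simp add: W_def)
qed

end
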